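(* Let $T^*_1,\dots,T^*_n$ be a sequence of releases of a dynamic dataset $T$ that is $m$-Distinct. Let $t$ be any record of $T$, with versions $t'_1,\dots,t'_I$ in these releases. Then in the feasible sub-SUG of $t$ built from these $I$ versions, every layer satisfies $|V'_i|\ge m$ for $i=1,\dots,I$.
   Context: Data model. A microdata table $T$ is published repeatedly as generalized tables $T^*_1,T^*_2,\dots$. Its records carry an identifier, quasi-identifier (QI) attributes and a sensitive attribute $S$ with a finite domain $\mathrm{dom}(S)$. Each published table partitions its records, possibly including counterfeit records, into QI-groups. If a record $t$ appears in a release, its candidate sensitive set in that release is the set of sensitive values occurring in its QI-group; this set contains $t$'s actual sensitive value. The versions of $t$ are its records in the successive releases in which it appears, listed in order: $t'_1,\dots,t'_I$, with candidate sensitive sets $C_1,\dots,C_I$. Internal updates are governed by a publicly known transition probability $P_{trans}(a,b)\ge 0$ for $a,b\in\mathrm{dom}(S)$. Sensitive attribute update graph (SUG). The SUG of $t$ has, for each $i=1,\dots,I$, a layer $V_i=\{v_{i,s}: s\in C_i\}$ with one node per value of $C_i$. There is a directed edge $(v_{i,s},v_{i+1,s'})$ exactly when $P_{trans}(s,s')>0$. Nodes and edges carry positive weights, which do not affect the feasible sub-SUG. Feasible sub-SUG. Obtain it from the SUG by repeatedly deleting a node, together with its incident edges, until no node can be deleted. A node is deleted if any of the following holds: it lies in $V_1$ and has no outgoing edge; it lies in $V_I$ and has no incoming edge; it lies in $V_i$ with $1<i<I$ and lacks an incoming edge or lacks an outgoing edge. When $I=1$, no node is deleted. Denote the remaining layers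 by $V'_i$. Definitions for $m$-Distinct. - For $a\in\mathrm{dom}(S)$, the candidate update set is $CUS(a)=\{b\in\mathrm{dom}(S): P_{trans}(a,b)>0\}$. - For a QI-group $g$ whose records have sensitive values $s_1,\dots,s_k$, its update set signature is the multiset $USS(g)=\{CUS(s_1),\dots,CUS(s_k)\}$. For a record version $t_i$, $USS(t_i)$ is the update set signature of the QI-group containing $t_i$. - A set of sensitive values $S'$ is a legal update instance of a multiset $U=\{U_1,\dots,U_k\}$ of subsets of $\mathrm{dom}(S)$ if all three of the following hold: $|S'|=k$; every $s\in S'$ lies in some $U_j$; every $U_j$ contains some $s\in S'$. - A published table is $m$-unique if every QI-group contains at least $m$ records, all with distinct sensitive values. The releases $T^*_1,\dots,T^*_n$ are $m$-Distinct if both of the following hold: 1. Each $T^*_i$ is $m$-unique. 2. Take any record $t$ and any two releases $T_i,T_j$ with $i<j$ that both contain $t$ and such that no release strictly between them contains $t$. Then the candidate sensitive set of $t_j$ is a legal update instance of $USS(t_i)$. *)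

theory Defs
  imports Complex_Main "HOL-Library.Multiset"
begin

text \<open>
A release (published generalized table) is a list of QI-groups; a QI-group is a
list of entries (owner, sensitive value). The owner is Some r for a genuine record with
identifier r and None for a counterfeit record. A sequence of releases T1..Tn is a list
of releases (0-based indices). The sensitive domain is a finite type 's; the transition
probability is P :: 's => 's => real.
\<close>

type_synonym ('r, 's) release = "('r option \<times> 's) list list"

definition well_formed_releases :: "('r, 's) release list \<Rightarrow> bool" where
  "well_formed_releases Ts \<longleftrightarrow>
     (\<forall>R \<in> set Ts. distinct (filter (\<lambda>x. x \<noteq> None) (map fst (concat R))))"

definition appears :: "('r, 's) release \<Rightarrow> 'r \<Rightarrow> bool" where
  "appears R t \<longleftrightarrow> (\<exists>g \<in> set R. Some t \<in> fst ` set g)"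

definition group_of :: "('r, 's) release \<Rightarrow> 'r \<Rightarrow> ('r option \<times> 's) list" where
  "group_of R t = (THE g. g \<in> set R \<and> Some t \<in> fst ` set g)"

definition cand :: "('r, 's) release \<Rightarrow> 'r \<Rightarrow> 's set" where
  "cand R t = snd ` set (group_of R t)"

definition CUS :: "('s \<Rightarrow> 's \<Rightarrow> real) \<Rightarrow> 's \<Rightarrow> 's set" where
  "CUS P a = {b. P a b > 0}"

definition USS :: "('s \<Rightarrow> 's \<Rightarrow> real) \<Rightarrow> ('r option \<times> 's) list \<Rightarrow> 's set multiset" where
  "USS P g = mset (map (\<lambda>e. CUS P (snd e)) g)"

definition legal_update_instance :: "'s set \<Rightarrow> 's set multiset \<Rightarrow> bool" where
  "legal_update_instance S' U \<longleftrightarrow>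
     finite S' \<and> card S' = size U \<and>
     (\<forall>s \<in> S'. \<exists>u \<in># U. s \<in> u) \<and> (\<forall>u \<in># U. \<exists>s \<in> S'. s \<in> u)"

definition m_unique :: "nat \<Rightarrow> ('r, 's) release \<Rightarrow> bool" where
  "m_unique m R \<longleftrightarrow> (\<forall>g \<in> set R. length g \<ge> m \<and> distinct (map snd g))"

definition m_distinct :: "('s \<Rightarrow> 's \<Rightarrow> real) \<Rightarrow> nat \<Rightarrow> ('r, 's) release list \<Rightarrow> bool" where
  "m_distinct P m Ts \<longleftrightarrow>
     (\<forall>R \<in> set Ts. m_unique m R) \<and>
     (\<forall>t i j. i < j \<and> j < length Ts \<and> appears (Ts ! i) t \<and> appears (Ts ! j) t \<and>
        (\<forall>k. i < k \<and> k < j \<longrightarrow> \<not> appears (Ts ! k) t) \<longrightarrow>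
        legal_update_instance (cand (Ts ! j) t) (USS P (group_of (Ts ! i) t)))"

text \<open>Versions of t: indices of the releases containing t, in order (length = I).\<close>
definition versions :: "('r, 's) release list \<Rightarrow> 'r \<Rightarrow> nat list" where
  "versions Ts t = filter (\<lambda>i. appears (Ts ! i) t) [0..<length Ts]"

text \<open>Candidate sensitive set C_k of the k-th version (0-based k).\<close>
definition cset :: "('r, 's) release list \<Rightarrow> 'r \<Rightarrow> nat \<Rightarrow> 's set" where
  "cset Ts t k = cand (Ts ! (versions Ts t ! k)) t"

text \<open>SUG nodes: node (k, s) is v_{k,s} of layer V_k. Edges (k,s) -> (k+1,s') iff P s s' > 0.\<close>
definition sug_nodes :: "('r, 's) release list \<Rightarrow> 'r \<Rightarrow> (nat \<times> 's) set" where
  "sug_nodes Ts t = {(k, s). k < length (versions Ts t) \<and> s \<in> cset Ts t k}"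

definition has_out :: "('s \<Rightarrow> 's \<Rightarrow> real) \<Rightarrow> (nat \<times> 's) set \<Rightarrow> nat \<times> 's \<Rightarrow> bool" where
  "has_out P X v \<longleftrightarrow> (\<exists>s'. (Suc (fst v), s') \<in> X \<and> P (snd v) s' > 0)"

definition has_in :: "('s \<Rightarrow> 's \<Rightarrow> real) \<Rightarrow> (nat \<times> 's) set \<Rightarrow> nat \<times> 's \<Rightarrow> bool" where
  "has_in P X v \<longleftrightarrow> (\<exists>s'. 0 < fst v \<and> (fst v - 1, s') \<in> X \<and> P s' (snd v) > 0)"

definition deletable :: "('s \<Rightarrow> 's \<Rightarrow> real) \<Rightarrow> nat \<Rightarrow> (nat \<times> 's) set \<Rightarrow> nat \<times> 's \<Rightarrow> bool" where
  "deletable P I X v \<longleftrightarrow> v \<in> X \<and> I \<ge> 2 \<and>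
     ((fst v = 0 \<and> \<not> has_out P X v) \<or>
      (fst v = I - 1 \<and> \<not> has_in P X v) \<or>
      (0 < fst v \<and> fst v < I - 1 \<and> (\<not> has_in P X v \<or> \<not> has_out P X v)))"

definition del_step :: "('s \<Rightarrow> 's \<Rightarrow> real) \<Rightarrow> nat \<Rightarrow> (nat \<times> 's) set \<Rightarrow> (nat \<times> 's) set \<Rightarrow> bool" where
  "del_step P I X Y \<longleftrightarrow> (\<exists>v. deletable P I X v \<and> Y = X - {v})"

definition feasible_sub_SUG :: "('s \<Rightarrow> 's \<Rightarrow> real) \<Rightarrow> ('r, 's) release list \<Rightarrow> 'r \<Rightarrow> (nat \<times> 's) set \<Rightarrow> bool" where
  "feasible_sub_SUG P Ts t X \<longleftrightarrow>
     (del_step P (length (versions Ts t)))\<^sup>*\<^sup>* (sug_nodes Ts t) X \<and>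
     \<not> (\<exists>v. deletable P (length (versions Ts t)) X v)"

definition layer :: "(nat \<times> 's) set \<Rightarrow> nat \<Rightarrow> 's set" where
  "layer X k = {s. (k, s) \<in> X}"

end

theory Submission
  imports Defs
begin

text \<open>
In an \<open>m\<close>-Distinct sequence of releases no node of the SUG of a record is deletable:
the legal update instance condition between consecutive versions says exactly that every
candidate value of one version has a positive-probability successor among the candidates
of the next version, and every candidate of the next version has a predecessor. Hence the
deletion process cannot start, the feasible sub-SUG is the whole SUG, and its \<open>k\<close>-th layer
is the candidate set of the \<open>k\<close>-th version, which has at least \<open>m\<close> elements because the
containing QI-group has at least \<open>m\<close> records with distinct sensitive values.
\<close>

lemma groups_containing_record_eq:
  assumes "distinct (filter (\<lambda>x. x \<noteq> None) (map fst (concat R)))"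
    and "g1 \<in> set R" "g2 \<in> set R" "Some t \<in> fst ` set g1" "Some t \<in> fst ` set g2"
  shows "g1 = g2"
  using assms
proof (induction R)
  case (Cons g R)
  have "Some t \<notin> fst ` set g" if "h \<in> set R" "Some t \<in> fst ` set h" for h
    using Cons.prems(1) that by force
  with Cons show ?case by auto
qed simp

lemma group_of_mem:
  assumes "distinct (filter (\<lambda>x. x \<noteq> None) (map fst (concat R)))" and "appears R t"
  shows "group_of R t \<in> set R"
proof -
  obtain g where g: "g \<in> set R" "Some t \<in> fst ` set g"
    using assms(2) unfolding appears_def by blast
  have "group_of R t = g"
    unfolding group_of_def by (rule the_equality) (use g groups_containing_record_eq[OF assms(1)] in blast)+
  with g show ?thesis by simp
qed

lemma versions_nth:
  assumes "k < length (versions Ts t)"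
  shows "versions Ts t ! k < length Ts" and "appears (Ts ! (versions Ts t ! k)) t"
proof -
  have "versions Ts t ! k \<in> set (versions Ts t)" using assms by simp
  then show "versions Ts t ! k < length Ts" and "appears (Ts ! (versions Ts t ! k)) t"
    unfolding versions_def by auto
qed

lemma sorted_wrt_versions: "sorted_wrt (<) (versions Ts t)"
  unfolding versions_def by (rule sorted_wrt_filter) (simp add: sorted_wrt_upt)

lemma versions_Suc_consecutive:
  assumes "Suc k < length (versions Ts t)"
  shows "versions Ts t ! k < versions Ts t ! Suc k"
    and "versions Ts t ! k < l \<Longrightarrow> l < versions Ts t ! Suc k \<Longrightarrow> \<not> appears (Ts ! l) t"
proof -
  let ?v = "versions Ts t"
  have less_iff: "?v ! a < ?v ! b \<longleftrightarrow> a < b" if "a < length ?v" "b < length ?v" for a b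
    using sorted_wrt_versions[of Ts t] that
    by (metis nat_neq_iff not_less_iff_gr_or_eq sorted_wrt_iff_nth_less)
  show "?v ! k < ?v ! Suc k" using assms less_iff by simp
  assume l: "?v ! k < l" "l < ?v ! Suc k"
  show "\<not> appears (Ts ! l) t"
  proof
    assume "appears (Ts ! l) t"
    moreover have "l < length Ts" using l versions_nth(1)[OF assms] by linarith
    ultimately have "l \<in> set ?v" unfolding versions_def by simp
    then obtain q where q: "q < length ?v" "?v ! q = l" by (metis in_set_conv_nth)
    then have "k < q" "q < Suc k" using l less_iff assms by auto
    then show False by simp
  qed
qed

lemma m_distinct_legal_update_instance:
  assumes "m_distinct P m Ts" and "Suc k < length (versions Ts t)"
  shows "legal_update_instance (cset Ts t (Suc k)) (USS P (group_of (Ts ! (versions Ts t ! k)) t))"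
proof -
  have k: "k < length (versions Ts t)" using assms(2) by simp
  have "\<forall>t i j. i < j \<and> j < length Ts \<and> appears (Ts ! i) t \<and> appears (Ts ! j) t \<and>
      (\<forall>l. i < l \<and> l < j \<longrightarrow> \<not> appears (Ts ! l) t) \<longrightarrow>
      legal_update_instance (cand (Ts ! j) t) (USS P (group_of (Ts ! i) t))"
    using assms(1) unfolding m_distinct_def by (rule conjunct2)
  then show ?thesis
    unfolding cset_def
    using versions_nth[OF k] versions_nth[OF assms(2)] versions_Suc_consecutive[OF assms(2)]
    by blast
qed

lemma legal_update_instance_USS_successor:
  assumes "legal_update_instance S (USS P g)" and "s \<in> snd ` set g"
  shows "\<exists>s' \<in> S. P s s' > 0"
proof -
  have "CUS P s \<in># USS P g" using assms(2) unfolding USS_def by auto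
  then have "\<exists>s' \<in> S. s' \<in> CUS P s"
    using assms(1) unfolding legal_update_instance_def by blast
  then show ?thesis unfolding CUS_def by simp
qed

lemma legal_update_instance_USS_predecessor:
  assumes "legal_update_instance S (USS P g)" and "s' \<in> S"
  shows "\<exists>s \<in> snd ` set g. P s s' > 0"
proof -
  obtain u where "u \<in># USS P g" "s' \<in> u"
    using assms unfolding legal_update_instance_def by blast
  then show ?thesis unfolding USS_def CUS_def by auto
qed

lemma m_distinct_sug_has_out:
  assumes "m_distinct P m Ts" and "Suc k < length (versions Ts t)" and "s \<in> cset Ts t k"
  shows "has_out P (sug_nodes Ts t) (k, s)"
proof -
  obtain s' where "s' \<in> cset Ts t (Suc k)" "P s s' > 0"
    using legal_update_instance_USS_successor[OF m_distinct_legal_update_instance[OF assms(1,2)]]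
      assms(3)[unfolded cset_def cand_def] unfolding cset_def cand_def by blast
  with assms(2) show ?thesis unfolding has_out_def sug_nodes_def by auto
qed

lemma m_distinct_sug_has_in:
  assumes "m_distinct P m Ts" and "Suc k < length (versions Ts t)" and "s \<in> cset Ts t (Suc k)"
  shows "has_in P (sug_nodes Ts t) (Suc k, s)"
proof -
  obtain s0 where "s0 \<in> cset Ts t k" "P s0 s > 0"
    using legal_update_instance_USS_predecessor[OF m_distinct_legal_update_instance[OF assms(1,2)]]
      assms(3) unfolding cset_def cand_def by blast
  with assms(2) show ?thesis unfolding has_in_def sug_nodes_def by auto
qed

lemma m_distinct_sug_not_deletable:
  assumes "m_distinct P m Ts"
  shows "\<not> deletable P (length (versions Ts t)) (sug_nodes Ts t) (k, s)"
proof
  let ?I = "length (versions Ts t)"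
  assume del: "deletable P ?I (sug_nodes Ts t) (k, s)"
  then have node: "k < ?I" "s \<in> cset Ts t k"
    unfolding deletable_def sug_nodes_def by auto
  have "has_out P (sug_nodes Ts t) (k, s)" if "k < ?I - 1"
    using m_distinct_sug_has_out[OF assms] that node by simp
  moreover have "has_in P (sug_nodes Ts t) (k, s)" if "0 < k"
    using m_distinct_sug_has_in[OF assms, of "k - 1" t s] that node by simp
  ultimately show False using del unfolding deletable_def by auto
qed

lemma m_distinct_feasible_sub_SUG_eq:
  assumes "m_distinct P m Ts" and "feasible_sub_SUG P Ts t X"
  shows "X = sug_nodes Ts t"
proof -
  have "(del_step P (length (versions Ts t)))\<^sup>*\<^sup>* (sug_nodes Ts t) X"
    using assms(2) unfolding feasible_sub_SUG_def by blast
  then show ?thesis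
    by (cases rule: converse_rtranclpE)
      (use m_distinct_sug_not_deletable[OF assms(1)] in \<open>auto simp: del_step_def\<close>)
qed

lemma m_distinct_card_cset:
  assumes "well_formed_releases Ts" and "m_distinct P m Ts" and "k < length (versions Ts t)"
  shows "m \<le> card (cset Ts t k)"
proof -
  let ?R = "Ts ! (versions Ts t ! k)"
  let ?g = "group_of ?R t"
  have R: "?R \<in> set Ts" using versions_nth(1)[OF assms(3)] by simp
  then have "distinct (filter (\<lambda>x. x \<noteq> None) (map fst (concat ?R)))"
    using assms(1) unfolding well_formed_releases_def by blast
  then have "?g \<in> set ?R" by (rule group_of_mem) (rule versions_nth(2)[OF assms(3)])
  moreover have "m_unique m ?R"
    using R conjunct1[OF assms(2)[unfolded m_distinct_def]] by blast
  ultimately have "m \<le> length ?g \<and> distinct (map snd ?g)" unfolding m_unique_def by blast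
  then show ?thesis unfolding cset_def cand_def by (metis distinct_card length_map set_map)
qed

theorem lemma3:
  fixes P :: "'s::finite \<Rightarrow> 's \<Rightarrow> real"
    and Ts :: "('r, 's) release list"
    and m :: nat and t :: 'r and X :: "(nat \<times> 's) set" and k :: nat
  assumes "\<forall>a b. P a b \<ge> 0"
    and "well_formed_releases Ts"
    and "m_distinct P m Ts"
    and "feasible_sub_SUG P Ts t X"
    and "k < length (versions Ts t)"
  shows "card (layer X k) \<ge> m"
proof -
  have "layer X k = cset Ts t k"
    using m_distinct_feasible_sub_SUG_eq[OF assms(3,4)] assms(5)
    unfolding layer_def sug_nodes_def by auto
  with m_distinct_card_cset[OF assms(2,3,5)] show ?thesis by simp
qed

end
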